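(* Let $A\in\mathbb R^{n\times n}$ be Hurwitz and consider a subsystem whose measurement output is its full state, $y=x$, with $G_{yu}(s)=(sI-A)^{-1}B$ and $G_{yv}(s)=(sI-A)^{-1}L$ (state equation $\dot x=Ax+Bu+Lv$), and with all blocks of the subsystem in $\mathcal{RH}_\infty$. Let $P,\overline P,P^\dagger,\overline P^\dagger$ satisfy $PP^\dagger=I$, $\overline P\,\overline P^\dagger=I$, (C1) $P^\dagger P+\overline P^\dagger\overline P=I_n$, (C2) $PAP^\dagger$ and $\overline PA\overline P^\dagger$ Hurwitz, (C3) $PL=0$ and $\overline PL$ nonsingular, and let $X(s):=P-(sI-PAP^\dagger)^{-1}PA\overline P^\dagger\overline P$. Then a controller $u=Kx$ is an output-rectifying retrofit controller if and only if $K=\hat KX$, where $\hat K$ is a stabilizing controller for $\hat G_{\xi u}(s):=(sI-PAP^\dagger)^{-1}PB$.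
   Context: $\mathcal{RH}_\infty$ denotes the set of stable, proper, real rational transfer matrices; a square real matrix is Hurwitz if all eigenvalues have negative real part. For a subsystem with interaction input $v$, control input $u$ and measurement output $y$, a controller $u=Ky$ is an output-rectifying retrofit controller if $K=(I+QG_{yu})^{-1}Q$ for some $Q\in\mathcal{RH}_\infty$ with $Q\,G_{yv}=0$. For transfer matrices $H$ and $C$, $C$ is a stabilizing controller for $H$ if the positive feedback loop $y=Hu$, $u=Cy$ is internally stable. *)

theory Defs
  imports "HOL-Computational_Algebra.Fraction_Field" "HOL-Computational_Algebra.Polynomial"
    "Jordan_Normal_Form.Char_Poly"
begin

text \<open>Real rational functions in s: the fraction field of real polynomials.
  Transfer matrices are matrices over this field.\<close>

type_synonym rfun = "real poly fract"
type_synonym tmat = "rfun mat"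

definition svar :: rfun where "svar = Fract [:0, 1:] 1"
definition rconst :: "real \<Rightarrow> rfun" where "rconst r = Fract [:r:] 1"

definition cmat :: "real mat \<Rightarrow> tmat" where "cmat M = map_mat rconst M"

definition RH_inf_scalar :: "rfun \<Rightarrow> bool" where
  "RH_inf_scalar f \<longleftrightarrow> (\<exists>p q. q \<noteq> 0 \<and> f = Fract p q \<and> degree p \<le> degree q \<and>
      (\<forall>z::complex. poly (map_poly complex_of_real q) z = 0 \<longrightarrow> Re z < 0))"

definition RH_inf :: "tmat \<Rightarrow> bool" where
  "RH_inf G \<longleftrightarrow> (\<forall>i < dim_row G. \<forall>j < dim_col G. RH_inf_scalar (G $$ (i, j)))"

definition hurwitz :: "real mat \<Rightarrow> bool" where
  "hurwitz A \<longleftrightarrow> square_mat A \<and>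
     (\<forall>l. eigenvalue (map_mat complex_of_real A) l \<longrightarrow> Re l < 0)"

definition minv :: "'a :: field mat \<Rightarrow> 'a mat" where
  "minv M = (SOME B. B \<in> carrier_mat (dim_row M) (dim_row M) \<and>
                     M * B = 1\<^sub>m (dim_row M) \<and> B * M = 1\<^sub>m (dim_row M))"

definition resolvent :: "real mat \<Rightarrow> tmat" where
  "resolvent M = minv (svar \<cdot>\<^sub>m 1\<^sub>m (dim_row M) - cmat M)"

definition output_rectifying_retrofit :: "tmat \<Rightarrow> tmat \<Rightarrow> tmat \<Rightarrow> bool" where
  "output_rectifying_retrofit Gyu Gyv K \<longleftrightarrow>
     (\<exists>Q. Q \<in> carrier_mat (dim_col Gyu) (dim_row Gyu) \<and> RH_inf Q \<and> Q * Gyv = 0\<^sub>m (dim_col Gyu) (dim_col Gyv) \<and>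
          invertible_mat (1\<^sub>m (dim_col Gyu) + Q * Gyu) \<and>
          K = minv (1\<^sub>m (dim_col Gyu) + Q * Gyu) * Q)"

text \<open>C is a stabilizing controller for H (H : p x m, C : m x p) in the positive feedback
  loop y = H u + w1, u = C y + w2: the map (w1,w2) to (y,u), i.e. the inverse of
  [[I, -H], [-C, I]], exists and lies in RH-infinity.\<close>
definition stabilizing :: "tmat \<Rightarrow> tmat \<Rightarrow> bool" where
  "stabilizing H C \<longleftrightarrow> C \<in> carrier_mat (dim_col H) (dim_row H) \<and>
     (let T = four_block_mat (1\<^sub>m (dim_row H)) (- H) (- C) (1\<^sub>m (dim_col H))
      in invertible_mat T \<and> RH_inf (minv T))"

end

theory Submission
  imports Defs "Subresultants.More_Homomorphisms"
begin

text \<open>Write \<open>G' = (sI - P A Pd)^-1 P B\<close> and \<open>X = P - (sI - P A Pd)^-1 P A Pbd Pb\<close>.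
  Inserting \<open>Pd P + Pbd Pb = I\<close> into \<open>P A\<close> gives \<open>X (sI - A)^-1 = (sI - P A Pd)^-1 P\<close>,
  hence \<open>X G\<^sub>y\<^sub>u = G'\<close>, \<open>X G\<^sub>y\<^sub>v = 0\<close> (as \<open>P L = 0\<close>) and \<open>X Pd = I\<close>.
  Since \<open>Pb G\<^sub>y\<^sub>v\<close> is nonsingular, every \<open>Q\<close> with \<open>Q G\<^sub>y\<^sub>v = 0\<close> factors as
  \<open>Q = (Q Pd) X\<close>; so the retrofit controllers are exactly \<open>(I + Q' G')^-1 Q' X\<close> with
  \<open>Q'\<close> stable. As \<open>G'\<close> is stable, the controllers \<open>(I + Q' G')^-1 Q'\<close> with \<open>Q'\<close> stable
  are precisely the stabilizing controllers of \<open>G'\<close> (Youla parametrization), \<open>Q'\<close> being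
  the lower left block of the closed-loop map.\<close>

section \<open>Stable proper rational functions\<close>

interpretation of_real_poly_hom: map_poly_comm_ring_hom "of_real :: real \<Rightarrow> complex" ..

lemma RH_inf_scalar_add:
  assumes "RH_inf_scalar f" "RH_inf_scalar g" shows "RH_inf_scalar (f + g)"
proof -
  from assms obtain p1 q1 p2 q2 where a: "q1 \<noteq> 0" "f = Fract p1 q1" "degree p1 \<le> degree q1"
    "\<And>z. poly (map_poly complex_of_real q1) z = 0 \<Longrightarrow> Re z < 0"
    and b: "q2 \<noteq> 0" "g = Fract p2 q2" "degree p2 \<le> degree q2"
    "\<And>z. poly (map_poly complex_of_real q2) z = 0 \<Longrightarrow> Re z < 0"
    unfolding RH_inf_scalar_def by metis
  have "f + g = Fract (p1 * q2 + p2 * q1) (q1 * q2)" using a b by (simp add: add_fract)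
  moreover have "degree (p1 * q2 + p2 * q1) \<le> degree (q1 * q2)"
  proof (rule degree_add_le)
    show "degree (p1 * q2) \<le> degree (q1 * q2)" "degree (p2 * q1) \<le> degree (q1 * q2)"
      using degree_mult_le[of p1 q2] degree_mult_le[of p2 q1] a b by (simp_all add: degree_mult_eq)
  qed
  ultimately show ?thesis unfolding RH_inf_scalar_def
    using a b by (intro exI[of _ "p1 * q2 + p2 * q1"] exI[of _ "q1 * q2"])
      (auto simp: of_real_poly_hom.hom_mult)
qed

lemma RH_inf_scalar_mult:
  assumes "RH_inf_scalar f" "RH_inf_scalar g" shows "RH_inf_scalar (f * g)"
proof -
  from assms obtain p1 q1 p2 q2 where a: "q1 \<noteq> 0" "f = Fract p1 q1" "degree p1 \<le> degree q1"
    "\<And>z. poly (map_poly complex_of_real q1) z = 0 \<Longrightarrow> Re z < 0"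
    and b: "q2 \<noteq> 0" "g = Fract p2 q2" "degree p2 \<le> degree q2"
    "\<And>z. poly (map_poly complex_of_real q2) z = 0 \<Longrightarrow> Re z < 0"
    unfolding RH_inf_scalar_def by metis
  have "f * g = Fract (p1 * p2) (q1 * q2)" using a b by (simp add: mult_fract)
  moreover have "degree (p1 * p2) \<le> degree (q1 * q2)"
    using degree_mult_le[of p1 p2] a b by (simp add: degree_mult_eq)
  ultimately show ?thesis unfolding RH_inf_scalar_def
    using a b by (intro exI[of _ "p1 * p2"] exI[of _ "q1 * q2"]) (auto simp: of_real_poly_hom.hom_mult)
qed

lemma RH_inf_scalar_uminus: "RH_inf_scalar f \<Longrightarrow> RH_inf_scalar (- f)"
  unfolding RH_inf_scalar_def by (metis degree_minus minus_fract)

lemma RH_inf_scalar_diff: "RH_inf_scalar f \<Longrightarrow> RH_inf_scalar g \<Longrightarrow> RH_inf_scalar (f - g)"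
  by (metis RH_inf_scalar_add RH_inf_scalar_uminus diff_conv_add_uminus)

lemma RH_inf_scalar_const: "RH_inf_scalar (Fract [:c:] 1)"
  unfolding RH_inf_scalar_def by (intro exI[of _ "[:c:]"] exI[of _ 1]) auto

lemma RH_inf_scalar_sum: "(\<And>i. i \<in> I \<Longrightarrow> RH_inf_scalar (f i)) \<Longrightarrow> RH_inf_scalar (sum f I)"
  using RH_inf_scalar_const[of 0]
  by (induction I rule: infinite_finite_induct) (auto simp: Zero_fract_def RH_inf_scalar_add)

lemma RH_infD: "RH_inf G \<Longrightarrow> i < dim_row G \<Longrightarrow> j < dim_col G \<Longrightarrow> RH_inf_scalar (G $$ (i, j))"
  unfolding RH_inf_def by auto

lemma RH_inf_mult:
  assumes "RH_inf A" "RH_inf B" "dim_col A = dim_row B" shows "RH_inf (A * B)"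
  unfolding RH_inf_def
proof (intro allI impI)
  fix i j assume ij: "i < dim_row (A * B)" "j < dim_col (A * B)"
  have "(A * B) $$ (i, j) = (\<Sum>k \<in> {0..<dim_row B}. A $$ (i, k) * B $$ (k, j))"
    using ij assms(3) by (simp add: scalar_prod_def)
  also have "RH_inf_scalar \<dots>"
    using ij assms by (intro RH_inf_scalar_sum RH_inf_scalar_mult) (auto intro: RH_infD)
  finally show "RH_inf_scalar ((A * B) $$ (i, j))" .
qed

lemma RH_inf_add:
  "RH_inf A \<Longrightarrow> RH_inf B \<Longrightarrow> dim_row A = dim_row B \<Longrightarrow> dim_col A = dim_col B \<Longrightarrow> RH_inf (A + B)"
  unfolding RH_inf_def by (auto intro: RH_inf_scalar_add)

lemma RH_inf_diff:
  "RH_inf A \<Longrightarrow> RH_inf B \<Longrightarrow> dim_row A = dim_row B \<Longrightarrow> dim_col A = dim_col B \<Longrightarrow> RH_inf (A - B)"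
  unfolding RH_inf_def by (auto intro: RH_inf_scalar_diff)

lemma RH_inf_four_block_mat_iff:
  assumes "A \<in> carrier_mat nr1 nc1" "B \<in> carrier_mat nr1 nc2"
    "C \<in> carrier_mat nr2 nc1" "D \<in> carrier_mat nr2 nc2"
  shows "RH_inf (four_block_mat A B C D) \<longleftrightarrow> RH_inf A \<and> RH_inf B \<and> RH_inf C \<and> RH_inf D"
proof
  assume RH: "RH_inf (four_block_mat A B C D)"
  have e: "RH_inf_scalar (four_block_mat A B C D $$ (i, j))"
    if "i < nr1 + nr2" "j < nc1 + nc2" for i j
    using that assms by (intro RH_infD[OF RH]) auto
  have "RH_inf_scalar (A $$ (i, j))" if "i < nr1" "j < nc1" for i j
    using e[of i j] that assms by (simp add: four_block_mat_def)
  moreover have "RH_inf_scalar (B $$ (i, j))" if "i < nr1" "j < nc2" for i j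
    using e[of i "j + nc1"] that assms by (simp add: four_block_mat_def)
  moreover have "RH_inf_scalar (C $$ (i, j))" if "i < nr2" "j < nc1" for i j
    using e[of "i + nr1" j] that assms by (simp add: four_block_mat_def)
  moreover have "RH_inf_scalar (D $$ (i, j))" if "i < nr2" "j < nc2" for i j
    using e[of "i + nr1" "j + nc1"] that assms by (simp add: four_block_mat_def)
  ultimately show "RH_inf A \<and> RH_inf B \<and> RH_inf C \<and> RH_inf D"
    using assms unfolding RH_inf_def by auto
qed (use assms in \<open>auto simp: RH_inf_def four_block_mat_def\<close>)

interpretation rconst_hom: comm_ring_hom rconst
  by unfold_locales (simp_all add: rconst_def flip: to_fract_def to_fract_hom.hom_add to_fract_hom.hom_mult)

lemma cmat_carrier_iff[simp]: "cmat M \<in> carrier_mat a b \<longleftrightarrow> M \<in> carrier_mat a b"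
  and dim_cmat[simp]: "dim_row (cmat M) = dim_row M" "dim_col (cmat M) = dim_col M"
  unfolding cmat_def carrier_mat_def by auto

lemma cmat_mult: "A \<in> carrier_mat a b \<Longrightarrow> B \<in> carrier_mat b c \<Longrightarrow> cmat (A * B) = cmat A * cmat B"
  unfolding cmat_def by (rule rconst_hom.mat_hom_mult)

lemma cmat_add: "A \<in> carrier_mat a b \<Longrightarrow> B \<in> carrier_mat a b \<Longrightarrow> cmat (A + B) = cmat A + cmat B"
  unfolding cmat_def by (rule eq_matI) (auto simp: rconst_hom.hom_add)

lemma cmat_zero[simp]: "cmat (0\<^sub>m a b) = 0\<^sub>m a b"
  and cmat_one[simp]: "cmat (1\<^sub>m a) = 1\<^sub>m a"
  unfolding cmat_def by (auto intro!: eq_matI)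

lemma det_cmat: "det (cmat M) = rconst (det M)"
  unfolding cmat_def by (rule rconst_hom.hom_det)

lemma RH_inf_cmat: "RH_inf (cmat M)"
  unfolding RH_inf_def cmat_def rconst_def by (auto intro: RH_inf_scalar_const)

lemma RH_inf_one: "RH_inf (1\<^sub>m k)"
  using RH_inf_cmat[of "1\<^sub>m k"] by simp

lemma split_block_four_block_mat:
  assumes "A \<in> carrier_mat nr1 nc1" "B \<in> carrier_mat nr1 nc2"
    "C \<in> carrier_mat nr2 nc1" "D \<in> carrier_mat nr2 nc2"
  shows "split_block (four_block_mat A B C D) nr1 nc1 = (A, B, C, D)"
  using assms unfolding split_block_def Let_def by (auto intro!: eq_matI)

lemma four_block_mat_eq_iff:
  assumes "A \<in> carrier_mat nr1 nc1" "B \<in> carrier_mat nr1 nc2"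
    "C \<in> carrier_mat nr2 nc1" "D \<in> carrier_mat nr2 nc2"
    and "A' \<in> carrier_mat nr1 nc1" "B' \<in> carrier_mat nr1 nc2"
    "C' \<in> carrier_mat nr2 nc1" "D' \<in> carrier_mat nr2 nc2"
  shows "four_block_mat A B C D = four_block_mat A' B' C' D' \<longleftrightarrow> A = A' \<and> B = B' \<and> C = C' \<and> D = D'"
proof
  assume "four_block_mat A B C D = four_block_mat A' B' C' D'"
  then have "split_block (four_block_mat A B C D) nr1 nc1 = split_block (four_block_mat A' B' C' D') nr1 nc1"
    by (rule arg_cong)
  then show "A = A' \<and> B = B' \<and> C = C' \<and> D = D'"
    unfolding split_block_four_block_mat[OF assms(1-4)] split_block_four_block_mat[OF assms(5-8)] by simp
qed simp

lemma add_uminus_eq_mat_iff: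
  fixes A B C :: "'a :: ab_group_add mat"
  assumes "dim_row B = dim_row A" "dim_col B = dim_col A" "dim_row C = dim_row A" "dim_col C = dim_col A"
  shows "A + - B = C \<longleftrightarrow> A = C + B" "- B + A = C \<longleftrightarrow> A = C + B"
  using assms by (auto simp: mat_eq_iff algebra_simps)

lemma mult_add_distrib_mat_dim:
  fixes A B C :: "'a :: semiring_0 mat"
  shows "dim_col A = dim_row B \<Longrightarrow> dim_row B = dim_row C \<Longrightarrow> dim_col B = dim_col C \<Longrightarrow>
    A * (B + C) = A * B + A * C"
  by (rule mult_add_distrib_mat[of _ _ "dim_col A" _ "dim_col B"]) auto

lemma add_mult_distrib_mat_dim:
  fixes A B C :: "'a :: semiring_0 mat"
  shows "dim_row A = dim_row B \<Longrightarrow> dim_col A = dim_col B \<Longrightarrow> dim_col A = dim_row C \<Longrightarrow>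
    (A + B) * C = A * C + B * C"
  by (rule add_mult_distrib_mat[of _ "dim_row A" "dim_col A" _ _ "dim_col C"]) auto

lemma mult_minus_distrib_mat_dim:
  fixes A B C :: "'a :: ring mat"
  shows "dim_col A = dim_row B \<Longrightarrow> dim_row B = dim_row C \<Longrightarrow> dim_col B = dim_col C \<Longrightarrow>
    A * (B - C) = A * B - A * C"
  by (rule mult_minus_distrib_mat[of _ _ "dim_col A" _ "dim_col B"]) auto

lemma minus_mult_distrib_mat_dim:
  fixes A B C :: "'a :: ring mat"
  shows "dim_row A = dim_row B \<Longrightarrow> dim_col A = dim_col B \<Longrightarrow> dim_col A = dim_row C \<Longrightarrow>
    (A - B) * C = A * C - B * C"
  by (rule minus_mult_distrib_mat[of _ "dim_row A" "dim_col A" _ _ "dim_col C"]) auto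

lemma assoc_mult_mat_dim:
  fixes A B C :: "'a :: semiring_0 mat"
  shows "dim_col A = dim_row B \<Longrightarrow> dim_col B = dim_row C \<Longrightarrow> A * B * C = A * (B * C)"
  by (rule assoc_mult_mat[of _ _ "dim_col A" _ "dim_col B" _ "dim_col C"]) auto

lemmas mat_ring_dim_simps = mult_add_distrib_mat_dim add_mult_distrib_mat_dim
  mult_minus_distrib_mat_dim minus_mult_distrib_mat_dim assoc_mult_mat_dim

lemma mult_nonsingular_eq_0_mat:
  fixes N Y :: "'a :: field mat"
  assumes N: "N \<in> carrier_mat k k" "det N \<noteq> 0" and Y: "Y \<in> carrier_mat a k" and "Y * N = 0\<^sub>m a k"
  shows "Y = 0\<^sub>m a k"
proof -
  have "det N \<cdot>\<^sub>m Y = Y * N * adj_mat N"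
    using Y N adj_mat[OF N(1)] by (simp add: mult_smult_distrib[OF Y one_carrier_mat])
  also have "\<dots> = 0\<^sub>m a k" using assms(4) adj_mat(1)[OF N(1)] by simp
  finally have "det N \<cdot>\<^sub>m Y = 0\<^sub>m a k" .
  then show ?thesis using Y N(2) by (auto simp: mat_eq_iff)
qed

lemma minv_eqI:
  assumes M: "M \<in> carrier_mat k k" and B: "B \<in> carrier_mat k k"
    and "M * B = 1\<^sub>m k" "B * M = 1\<^sub>m k"
  shows "minv M = B"
proof -
  let ?inv = "\<lambda>B. B \<in> carrier_mat k k \<and> M * B = 1\<^sub>m k \<and> B * M = 1\<^sub>m k"
  have "?inv (minv M)"
    using someI[of ?inv B] assms unfolding minv_def by auto
  then have B': "minv M \<in> carrier_mat k k" "minv M * M = 1\<^sub>m k" by auto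
  have "minv M = minv M * (M * B)" using assms B' by simp
  also have "\<dots> = B" using B' M B by (simp flip: assoc_mult_mat[of _ k k M k B k])
  finally show ?thesis .
qed

lemma minv_mat:
  assumes "invertible_mat M" "M \<in> carrier_mat k k"
  shows "minv M \<in> carrier_mat k k" "M * minv M = 1\<^sub>m k" "minv M * M = 1\<^sub>m k"
proof -
  obtain B where B: "B \<in> carrier_mat k k" "M * B = 1\<^sub>m k" "B * M = 1\<^sub>m k"
    using assms unfolding invertible_mat_def inverts_mat_def
    by (metis carrier_matD carrier_matI index_mult_mat(2,3) index_one_mat(2,3))
  then show "minv M \<in> carrier_mat k k" "M * minv M = 1\<^sub>m k" "minv M * M = 1\<^sub>m k"
    using minv_eqI[OF assms(2)] by auto
qed

lemma invertible_matI:
  "M \<in> carrier_mat k k \<Longrightarrow> B \<in> carrier_mat k k \<Longrightarrow> M * B = 1\<^sub>m k \<Longrightarrow> B * M = 1\<^sub>m k \<Longrightarrow> invertible_mat M"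
  unfolding invertible_mat_def inverts_mat_def by (intro conjI exI[of _ B]) auto

lemma mult_mat_vec_zero[simp]: "A \<in> carrier_mat nr nc \<Longrightarrow> A *\<^sub>v 0\<^sub>v nc = 0\<^sub>v nr"
  by (rule eq_vecI) (auto simp: scalar_prod_def)

lemma four_block_mat_eq_one_mat_iff:
  assumes "A \<in> carrier_mat n1 n1" "B \<in> carrier_mat n1 n2" "C \<in> carrier_mat n2 n1" "D \<in> carrier_mat n2 n2"
  shows "four_block_mat A B C D = 1\<^sub>m (n1 + n2) \<longleftrightarrow> A = 1\<^sub>m n1 \<and> B = 0\<^sub>m n1 n2 \<and> C = 0\<^sub>m n2 n1 \<and> D = 1\<^sub>m n2"
  using four_block_mat_eq_iff[OF assms one_carrier_mat zero_carrier_mat zero_carrier_mat one_carrier_mat]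
  by (simp del: four_block_one_mat add: four_block_one_mat[symmetric])

section \<open>Resolvents\<close>

lemma char_matrix_eq_char_poly_matrix:
  assumes "M \<in> carrier_mat k k"
  shows "svar \<cdot>\<^sub>m 1\<^sub>m k - cmat M = map_mat to_fract (char_poly_matrix M)"
  using assms
  by (auto intro!: eq_matI simp: char_poly_matrix_def cmat_def svar_def rconst_def
      simp flip: to_fract_def to_fract_hom.hom_add to_fract_hom.hom_mult to_fract_hom.hom_uminus
        to_fract_hom.hom_minus)

lemma cofactor_map_to_fract: "cofactor (map_mat to_fract C) i j = to_fract (cofactor C i j)"
proof -
  have "mat_delete (map_mat to_fract C) i j = map_mat to_fract (mat_delete C i j)"
    by (auto intro!: eq_matI simp: mat_delete_def)
  then show ?thesis
    unfolding cofactor_def by (simp add: to_fract_hom.hom_det to_fract_hom.hom_power)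
qed

lemma resolvent_mat:
  assumes M: "M \<in> carrier_mat k k"
  shows "resolvent M \<in> carrier_mat k k"
    and "(svar \<cdot>\<^sub>m 1\<^sub>m k - cmat M) * resolvent M = 1\<^sub>m k"
    and "resolvent M * (svar \<cdot>\<^sub>m 1\<^sub>m k - cmat M) = 1\<^sub>m k"
    and "i < k \<Longrightarrow> j < k \<Longrightarrow> resolvent M $$ (i, j) = Fract (cofactor (char_poly_matrix M) j i) (char_poly M)"
proof -
  define D where "D = svar \<cdot>\<^sub>m 1\<^sub>m k - cmat M"
  have DC: "D = map_mat to_fract (char_poly_matrix M)"
    unfolding D_def by (rule char_matrix_eq_char_poly_matrix[OF M])
  have D: "D \<in> carrier_mat k k" using M unfolding D_def by auto
  have "char_poly M \<noteq> 0" using degree_monic_char_poly[OF M] by auto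
  moreover have detD: "det D = to_fract (char_poly M)"
    unfolding DC char_poly_def by (rule to_fract_hom.hom_det)
  ultimately have "det D \<noteq> 0" by simp
  define R where "R = inverse (det D) \<cdot>\<^sub>m adj_mat D"
  have R: "R \<in> carrier_mat k k" unfolding R_def using adj_mat(1)[OF D] by simp
  have DR: "D * R = 1\<^sub>m k" unfolding R_def
    using mult_smult_distrib[OF D adj_mat(1)[OF D]] adj_mat(2)[OF D] \<open>det D \<noteq> 0\<close>
    by (auto intro!: eq_matI)
  have RD: "R * D = 1\<^sub>m k" unfolding R_def
    using mult_smult_assoc_mat[OF adj_mat(1)[OF D] D] adj_mat(3)[OF D] \<open>det D \<noteq> 0\<close>
    by (auto intro!: eq_matI)
  have res: "resolvent M = R"
    using minv_eqI[OF D R DR RD] M unfolding resolvent_def D_def by simp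
  show "resolvent M \<in> carrier_mat k k" "(svar \<cdot>\<^sub>m 1\<^sub>m k - cmat M) * resolvent M = 1\<^sub>m k"
    "resolvent M * (svar \<cdot>\<^sub>m 1\<^sub>m k - cmat M) = 1\<^sub>m k"
    using R DR RD unfolding res D_def by auto
  show "resolvent M $$ (i, j) = Fract (cofactor (char_poly_matrix M) j i) (char_poly M)"
    if "i < k" "j < k"
    using that M unfolding res R_def adj_mat_def detD DC
    by (simp add: cofactor_map_to_fract to_fract_def char_poly_def carrier_matD[OF char_poly_matrix_closed])
qed

lemma degree_det_le:
  assumes A: "A \<in> carrier_mat l l" and deg: "\<And>i j. i < l \<Longrightarrow> j < l \<Longrightarrow> degree (A $$ (i, j)) \<le> 1"
  shows "degree (det A) \<le> l"
  unfolding det_def'[OF A]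
proof (rule degree_sum_le)
  fix p assume "p \<in> {p. p permutes {0..<l}}"
  then have "degree (\<Prod>i = 0..<l. A $$ (i, p i)) \<le> (\<Sum>i = 0..<l. 1)"
    by (intro order.trans[OF degree_prod_sum_le] sum_mono) (use deg permutes_in_image in auto)
  then show "degree (signof p * (\<Prod>i = 0..<l. A $$ (i, p i))) \<le> l" by simp
qed (simp add: finite_permutations)

lemma degree_cofactor_char_poly_matrix:
  fixes M :: "'a :: comm_ring_1 mat"
  assumes M: "M \<in> carrier_mat k k"
  shows "degree (cofactor (char_poly_matrix M) i j) \<le> k"
proof -
  let ?C = "char_poly_matrix M"
  have C: "?C \<in> carrier_mat k k" using M by simp
  have "degree (det (mat_delete ?C i j)) \<le> k - 1"
  proof (rule degree_det_le)
    show "mat_delete ?C i j \<in> carrier_mat (k - 1) (k - 1)" using mat_delete_carrier[OF C] .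
    fix a b assume "a < k - 1" "b < k - 1"
    then show "degree (mat_delete ?C i j $$ (a, b)) \<le> 1"
      using M by (auto simp: mat_delete_def char_poly_matrix_def)
  qed
  moreover have "degree ((- 1 :: 'a poly) ^ (i + j)) = 0"
    using degree_power_le[of "- 1 :: 'a poly" "i + j"] by simp
  ultimately show ?thesis
    unfolding cofactor_def
    using degree_mult_le[of "(- 1 :: 'a poly) ^ (i + j)" "det (mat_delete (char_poly_matrix M) i j)"] by linarith
qed

lemma hurwitz_char_poly_root:
  assumes "hurwitz M" "M \<in> carrier_mat k k" "poly (map_poly complex_of_real (char_poly M)) z = 0"
  shows "Re z < 0"
proof -
  have "eigenvalue (map_mat complex_of_real M) z"
    using assms(2,3) by (simp add: eigenvalue_root_char_poly of_real_hom.char_poly_hom)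
  then show ?thesis using assms(1) unfolding hurwitz_def by auto
qed

lemma RH_inf_resolvent:
  assumes "hurwitz M" shows "RH_inf (resolvent M)"
proof -
  define k where "k = dim_row M"
  have M: "M \<in> carrier_mat k k" using assms unfolding hurwitz_def k_def by auto
  have "char_poly M \<noteq> 0" "degree (char_poly M) = k"
    using degree_monic_char_poly[OF M] by auto
  then have "RH_inf_scalar (Fract (cofactor (char_poly_matrix M) j i) (char_poly M))"
    if "i < k" "j < k" for i j
    unfolding RH_inf_scalar_def
    using degree_cofactor_char_poly_matrix[OF M] hurwitz_char_poly_root[OF assms M] by blast
  then show ?thesis
    using resolvent_mat[OF M] unfolding RH_inf_def by auto
qed

section \<open>Youla parametrization for a stable plant\<close>

text \<open>\<open>S2\<close>, \<open>S3\<close>, \<open>S4\<close> are the blocks of the inverse of the loop matrix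
  \<open>[[I, -H], [-C, I]]\<close>; the proof shows \<open>S4 = (I - C H)^-1\<close>.\<close>

lemma closed_loop_blocks_Youla:
  fixes H C S2 S3 S4 :: "'a :: field mat"
  assumes H: "H \<in> carrier_mat p m" and C: "C \<in> carrier_mat m p"
    and S: "S2 \<in> carrier_mat p m" "S3 \<in> carrier_mat m p" "S4 \<in> carrier_mat m m"
    and S2: "S2 = H * S4" and S3: "S3 = S4 * C"
    and S4C: "S4 = 1\<^sub>m m + C * S2" and S4H: "S4 = 1\<^sub>m m + S3 * H"
  shows "invertible_mat (1\<^sub>m m + S3 * H)" "C = minv (1\<^sub>m m + S3 * H) * S3"
proof -
  define Z where "Z = 1\<^sub>m m - C * H"
  have Z: "Z \<in> carrier_mat m m" unfolding Z_def using C H by auto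
  have "S4 * Z = 1\<^sub>m m"
  proof -
    have "S4 * Z = S4 - S3 * H" unfolding Z_def S3 using S C H by (simp add: mat_ring_dim_simps)
    also have "\<dots> = 1\<^sub>m m" by (subst S4H) (use S H in \<open>auto intro!: eq_matI\<close>)
    finally show ?thesis .
  qed
  moreover have "Z * S4 = 1\<^sub>m m"
  proof -
    have "Z * S4 = S4 - C * S2" unfolding Z_def S2 using S C H by (simp add: mat_ring_dim_simps)
    also have "\<dots> = 1\<^sub>m m" by (subst S4C) (use S C in \<open>auto intro!: eq_matI\<close>)
    finally show ?thesis .
  qed
  ultimately have "invertible_mat S4" "minv S4 = Z"
    using invertible_matI minv_eqI S(3) Z by blast+
  moreover have "Z * S3 = C"
    unfolding S3 using \<open>Z * S4 = 1\<^sub>m m\<close> Z S C by (simp flip: assoc_mult_mat_dim)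
  ultimately show "invertible_mat (1\<^sub>m m + S3 * H)" "C = minv (1\<^sub>m m + S3 * H) * S3"
    unfolding S4H[symmetric] by auto
qed

lemma stabilizing_imp_Youla:
  assumes H: "H \<in> carrier_mat p m" and stab: "stabilizing H C"
  shows "\<exists>Q \<in> carrier_mat m p. RH_inf Q \<and> invertible_mat (1\<^sub>m m + Q * H) \<and>
    C = minv (1\<^sub>m m + Q * H) * Q"
proof -
  define T where "T = four_block_mat (1\<^sub>m p) (- H) (- C) (1\<^sub>m m)"
  have C: "C \<in> carrier_mat m p" and "invertible_mat T" "RH_inf (minv T)"
    using stab H unfolding stabilizing_def Let_def T_def by auto
  have T: "T \<in> carrier_mat (p + m) (p + m)" unfolding T_def using H C by auto
  obtain S1 S2 S3 S4 where "split_block (minv T) p p = (S1, S2, S3, S4)"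
    by (cases "split_block (minv T) p p") auto
  with minv_mat[OF \<open>invertible_mat T\<close> T] have
    S: "S1 \<in> carrier_mat p p" "S2 \<in> carrier_mat p m" "S3 \<in> carrier_mat m p" "S4 \<in> carrier_mat m m"
    and S_eq: "minv T = four_block_mat S1 S2 S3 S4"
    using split_block[of "minv T" p p _ _ _ _ m m] by auto
  have "RH_inf S3"
    using \<open>RH_inf (minv T)\<close> RH_inf_four_block_mat_iff[OF S] unfolding S_eq by simp
  have "four_block_mat (S1 + - (H * S3)) (S2 + - (H * S4)) (- (C * S1) + S3) (- (C * S2) + S4)
      = 1\<^sub>m (p + m)" (is "four_block_mat ?A ?B ?C ?D = _")
    using minv_mat(2)[OF \<open>invertible_mat T\<close> T, unfolded S_eq, unfolded T_def] H C S
    by (simp add: mult_four_block_mat[where ?nr1.0=p and ?n1.0=p and ?n2.0=m and ?nr2.0=m and ?nc1.0=p and ?nc2.0=m])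
  then have "?B = 0\<^sub>m p m" "?D = 1\<^sub>m m"
    using four_block_mat_eq_one_mat_iff[of ?A p ?B m ?C ?D] H C S by auto
  then have S2: "S2 = H * S4" and S4C: "S4 = 1\<^sub>m m + C * S2"
    using H C S by (simp_all add: add_uminus_eq_mat_iff carrier_matD)
  have "four_block_mat (S1 + - (S2 * C)) (- (S1 * H) + S2) (S3 + - (S4 * C)) (- (S3 * H) + S4)
      = 1\<^sub>m (p + m)" (is "four_block_mat ?A ?B ?C ?D = _")
    using minv_mat(3)[OF \<open>invertible_mat T\<close> T, unfolded S_eq, unfolded T_def] H C S
    by (simp add: mult_four_block_mat[where ?nr1.0=p and ?n1.0=p and ?n2.0=m and ?nr2.0=m and ?nc1.0=p and ?nc2.0=m])
  then have "?C = 0\<^sub>m m p" "?D = 1\<^sub>m m"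
    using four_block_mat_eq_one_mat_iff[of ?A p ?B m ?C ?D] H C S by auto
  then have S3: "S3 = S4 * C" and S4H: "S4 = 1\<^sub>m m + S3 * H"
    using H C S by (simp_all add: add_uminus_eq_mat_iff carrier_matD)
  show ?thesis using closed_loop_blocks_Youla[OF H C S(2-4) S2 S3 S4C S4H] S(3) \<open>RH_inf S3\<close> by blast
qed

lemma Youla_imp_stabilizing:
  assumes H: "H \<in> carrier_mat p m" "RH_inf H" and Q: "Q \<in> carrier_mat m p" "RH_inf Q"
    and inv: "invertible_mat (1\<^sub>m m + Q * H)"
  shows "stabilizing H (minv (1\<^sub>m m + Q * H) * Q)"
proof -
  define N where "N = minv (1\<^sub>m m + Q * H)"
  define C where "C = N * Q"
  have N: "N \<in> carrier_mat m m" "N * (1\<^sub>m m + Q * H) = 1\<^sub>m m"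
    using minv_mat[OF inv] H Q unfolding N_def by auto
  have C: "C \<in> carrier_mat m p" unfolding C_def using N Q by simp
  have HQ: "H * (1\<^sub>m m + Q * H) = (1\<^sub>m p + H * Q) * H"
    using H Q by (simp add: mat_ring_dim_simps)
  have push_through: "C * (1\<^sub>m p + H * Q) = Q"
  proof -
    have "C * (1\<^sub>m p + H * Q) = N * ((1\<^sub>m m + Q * H) * Q)"
      unfolding C_def using N Q H by (simp add: mat_ring_dim_simps)
    also have "\<dots> = Q" using N Q H by (simp flip: assoc_mult_mat_dim)
    finally show ?thesis .
  qed
  define T where "T = four_block_mat (1\<^sub>m p) (- H) (- C) (1\<^sub>m m)"
  \<comment> \<open>the closed-loop map, expressed through \<open>Q\<close>\<close>
  define S where "S = four_block_mat (1\<^sub>m p + H * Q) (H * (1\<^sub>m m + Q * H)) Q (1\<^sub>m m + Q * H)"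
  have T: "T \<in> carrier_mat (p + m) (p + m)" unfolding T_def using H C by auto
  have S: "S \<in> carrier_mat (p + m) (p + m)" unfolding S_def using H Q by auto
  have "T * S = four_block_mat (1\<^sub>m p + H * Q + - (H * Q)) (H * (1\<^sub>m m + Q * H) + - (H * (1\<^sub>m m + Q * H)))
      (- (C * (1\<^sub>m p + H * Q)) + Q) (- (C * (H * (1\<^sub>m m + Q * H))) + (1\<^sub>m m + Q * H))"
    unfolding T_def S_def using H Q C
    by (simp add: mult_four_block_mat[where ?nr1.0=p and ?n1.0=p and ?n2.0=m and ?nr2.0=m and ?nc1.0=p and ?nc2.0=m])
  also have "\<dots> = 1\<^sub>m (p + m)"
  proof -
    have "C * (H * (1\<^sub>m m + Q * H)) = Q * H"
      unfolding HQ using C H Q push_through by (simp flip: assoc_mult_mat_dim)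
    then show ?thesis
      using H Q push_through
      by (simp add: four_block_mat_eq_one_mat_iff add_uminus_eq_mat_iff carrier_matD[OF H(1)] carrier_matD[OF Q(1)])
  qed
  finally have "T * S = 1\<^sub>m (p + m)" .
  moreover have "S * T = 1\<^sub>m (p + m)"
    using mat_mult_left_right_inverse[OF T S] calculation .
  moreover have "RH_inf S"
    unfolding S_def using H Q
    by (simp add: RH_inf_four_block_mat_iff[where ?nr1.0=p and ?nc1.0=p and ?nc2.0=m and ?nr2.0=m]
        RH_inf_add RH_inf_mult RH_inf_one)
  ultimately have "invertible_mat T" "minv T = S" "RH_inf S"
    using invertible_matI[OF T S] minv_eqI[OF T S] by auto
  then show ?thesis
    unfolding stabilizing_def Let_def N_def[symmetric] C_def[symmetric]
    using C carrier_matD[OF H(1)] by (simp add: T_def)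
qed

lemma stabilizing_iff_Youla:
  assumes "H \<in> carrier_mat p m" "RH_inf H"
  shows "stabilizing H C \<longleftrightarrow> (\<exists>Q \<in> carrier_mat m p. RH_inf Q \<and> invertible_mat (1\<^sub>m m + Q * H) \<and>
    C = minv (1\<^sub>m m + Q * H) * Q)"
  using stabilizing_imp_Youla[OF assms(1)] Youla_imp_stabilizing[OF assms] by blast

section \<open>Output-rectifying retrofit controllers\<close>

lemma output_rectifying_retrofit_iff_factor:
  fixes G W X E Gh :: tmat
  assumes G: "G \<in> carrier_mat n m" and W: "W \<in> carrier_mat n p"
    and X: "X \<in> carrier_mat r n" "RH_inf X" and E: "E \<in> carrier_mat n r" "RH_inf E"
    and XG: "X * G = Gh" and XW: "X * W = 0\<^sub>m r p"
    and factor: "\<And>Q. Q \<in> carrier_mat m n \<Longrightarrow> Q * W = 0\<^sub>m m p \<Longrightarrow> Q = Q * E * X"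
  shows "output_rectifying_retrofit G W K \<longleftrightarrow>
    (\<exists>Qh \<in> carrier_mat m r. RH_inf Qh \<and> invertible_mat (1\<^sub>m m + Qh * Gh) \<and>
      K = minv (1\<^sub>m m + Qh * Gh) * Qh * X)"
proof
  assume "output_rectifying_retrofit G W K"
  then obtain Q where Q: "Q \<in> carrier_mat m n" "RH_inf Q" and QW: "Q * W = 0\<^sub>m m p"
    and "invertible_mat (1\<^sub>m m + Q * G)" and K: "K = minv (1\<^sub>m m + Q * G) * Q"
    unfolding output_rectifying_retrofit_def using G W by auto
  have QEX: "Q = Q * E * X" by (rule factor[OF Q(1) QW])
  have Gh: "Gh \<in> carrier_mat r m" using X G XG by auto
  have QG: "Q * G = Q * E * Gh"
    by (subst QEX) (use Q E X G in \<open>simp add: assoc_mult_mat_dim flip: XG\<close>)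
  have "Q * E \<in> carrier_mat m r" "RH_inf (Q * E)"
    using Q E by (auto intro: RH_inf_mult)
  moreover have "K = minv (1\<^sub>m m + Q * E * Gh) * (Q * E) * X"
  proof -
    have "K = minv (1\<^sub>m m + Q * E * Gh) * (Q * E * X)"
      unfolding K QG by (rule arg_cong[where f = "\<lambda>M. minv (1\<^sub>m m + Q * E * Gh) * M", OF QEX])
    moreover have "minv (1\<^sub>m m + Q * E * Gh) \<in> carrier_mat m m"
      using \<open>invertible_mat (1\<^sub>m m + Q * G)\<close> Q E Gh unfolding QG by (intro minv_mat(1)) auto
    ultimately show ?thesis using Q E X by (simp add: assoc_mult_mat_dim)
  qed
  ultimately show "\<exists>Qh \<in> carrier_mat m r. RH_inf Qh \<and> invertible_mat (1\<^sub>m m + Qh * Gh) \<and>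
      K = minv (1\<^sub>m m + Qh * Gh) * Qh * X"
    using \<open>invertible_mat (1\<^sub>m m + Q * G)\<close> unfolding QG by blast
next
  assume "\<exists>Qh \<in> carrier_mat m r. RH_inf Qh \<and> invertible_mat (1\<^sub>m m + Qh * Gh) \<and>
      K = minv (1\<^sub>m m + Qh * Gh) * Qh * X"
  then obtain Qh where Qh: "Qh \<in> carrier_mat m r" "RH_inf Qh"
    and "invertible_mat (1\<^sub>m m + Qh * Gh)" and K: "K = minv (1\<^sub>m m + Qh * Gh) * Qh * X"
    by blast
  have QG: "Qh * X * G = Qh * Gh" using Qh X G by (simp add: assoc_mult_mat_dim XG)
  have "minv (1\<^sub>m m + Qh * Gh) \<in> carrier_mat m m"
    using \<open>invertible_mat (1\<^sub>m m + Qh * Gh)\<close> Qh X G unfolding XG[symmetric] by (intro minv_mat(1)) auto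
  have "Qh * X \<in> carrier_mat m n" "RH_inf (Qh * X)" "Qh * X * W = 0\<^sub>m m p"
    using Qh X W by (auto intro: RH_inf_mult simp: assoc_mult_mat_dim XW)
  moreover have "K = minv (1\<^sub>m m + Qh * X * G) * (Qh * X)"
    unfolding K QG using \<open>minv (1\<^sub>m m + Qh * Gh) \<in> carrier_mat m m\<close> Qh X by (simp add: assoc_mult_mat_dim)
  ultimately show "output_rectifying_retrofit G W K"
    unfolding output_rectifying_retrofit_def
    using \<open>invertible_mat (1\<^sub>m m + Qh * Gh)\<close> G W QG by auto
qed

lemma complement_mult_right_inverse_eq_0:
  fixes P Pd Pb Pbd :: "'a :: comm_ring_1 mat"
  assumes P: "P \<in> carrier_mat r n" and Pd: "Pd \<in> carrier_mat n r"
    and Pb: "Pb \<in> carrier_mat q n" and Pbd: "Pbd \<in> carrier_mat n q"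
    and "P * Pd = 1\<^sub>m r" "Pb * Pbd = 1\<^sub>m q" and decomp: "Pd * P + Pbd * Pb = 1\<^sub>m n"
  shows "Pb * Pd = 0\<^sub>m q r"
proof -
  have "Pb * Pd = Pb * (Pd * P + Pbd * Pb) * Pd" using decomp Pb Pd by simp
  also have "\<dots> = Pb * Pd * (P * Pd) + Pb * Pbd * (Pb * Pd)"
    using P Pd Pb Pbd by (simp add: mat_ring_dim_simps carrier_matD)
  also have "\<dots> = Pb * Pd + Pb * Pd"
    using Pb Pd assms(5,6) by simp
  finally show ?thesis
    using Pb Pd by (auto simp: mat_eq_iff dest!: arg_cong[of _ _ "\<lambda>M. M $$ _"])
qed

lemma resolvent_intertwining:
  assumes A: "A \<in> carrier_mat n n" and M: "M \<in> carrier_mat r r"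
    and P: "P \<in> carrier_mat r n" and Y: "Y \<in> carrier_mat r n" and PA: "P * A = M * P + Y"
  shows "(cmat P - resolvent M * cmat Y) * resolvent A = resolvent M * cmat P"
proof -
  define D where "D = svar \<cdot>\<^sub>m 1\<^sub>m n - cmat A"
  define DM where "DM = svar \<cdot>\<^sub>m 1\<^sub>m r - cmat M"
  note R = resolvent_mat[OF A, folded D_def] and RM = resolvent_mat[OF M, folded DM_def]
  have D: "D \<in> carrier_mat n n" and DM: "DM \<in> carrier_mat r r" unfolding D_def DM_def using A M by auto
  note dims = carrier_matD[OF A] carrier_matD[OF M] carrier_matD[OF P] carrier_matD[OF Y]
    carrier_matD[OF D] carrier_matD[OF DM] carrier_matD[OF R(1)] carrier_matD[OF RM(1)]
  have "cmat P * cmat A = cmat M * cmat P + cmat Y"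
    using cmat_add[of "M * P" r n Y] cmat_mult[OF P A] cmat_mult[OF M P] PA M P Y by simp
  then have "cmat P * D = DM * cmat P - cmat Y"
    unfolding D_def DM_def using P
    by (simp add: mult_minus_distrib_mat_dim minus_mult_distrib_mat_dim dims
        mult_smult_distrib[of _ r n "1\<^sub>m n" n] mult_smult_assoc_mat[of "1\<^sub>m r" r r _ n])
      (auto intro!: eq_matI simp: dims)
  then have "cmat P - resolvent M * cmat Y = resolvent M * (cmat P * D)"
    using RM(3) by (simp add: mult_minus_distrib_mat_dim dims flip: assoc_mult_mat_dim)
  then show ?thesis
    using R(2) by (simp add: assoc_mult_mat_dim dims)
qed

text \<open>\<open>Pb\<close> is injective on the range of \<open>W\<close>: if \<open>Pb w = 0\<close> there, then \<open>w = E P w\<close>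
  and \<open>P w = X E P w = X w = 0\<close>.\<close>

lemma det_complement_mult_nonzero:
  fixes X E P Pb Eb W :: "'a :: field mat"
  assumes X: "X \<in> carrier_mat r n" and E: "E \<in> carrier_mat n r" and P: "P \<in> carrier_mat r n"
    and Pb: "Pb \<in> carrier_mat q n" and Eb: "Eb \<in> carrier_mat n q" and W: "W \<in> carrier_mat n q"
    and XE: "X * E = 1\<^sub>m r" and XW: "X * W = 0\<^sub>m r q" and decomp: "E * P + Eb * Pb = 1\<^sub>m n"
    and inj: "\<And>v. v \<in> carrier_vec q \<Longrightarrow> W *\<^sub>v v = 0\<^sub>v n \<Longrightarrow> v = 0\<^sub>v q"
  shows "det (Pb * W) \<noteq> 0"
proof
  assume "det (Pb * W) = 0"
  then obtain v where v: "v \<in> carrier_vec q" "v \<noteq> 0\<^sub>v q" and "(Pb * W) *\<^sub>v v = 0\<^sub>v q"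
    using det_0_iff_vec_prod_zero_field[of "Pb * W" q] Pb W by auto
  define w where "w = W *\<^sub>v v"
  have w: "w \<in> carrier_vec n" unfolding w_def using W v by auto
  have Pbw: "Pb *\<^sub>v w = 0\<^sub>v q"
    unfolding w_def using \<open>(Pb * W) *\<^sub>v v = 0\<^sub>v q\<close> Pb W v by (simp add: assoc_mult_mat_vec)
  have "X *\<^sub>v w = (X * W) *\<^sub>v v" unfolding w_def using X W v by (simp add: assoc_mult_mat_vec)
  also have "\<dots> = 0\<^sub>v r" unfolding XW using v by (intro eq_vecI) (auto simp: scalar_prod_def)
  finally have Xw: "X *\<^sub>v w = 0\<^sub>v r" .
  have "w = (E * P + Eb * Pb) *\<^sub>v w" using decomp w by simp
  also have "\<dots> = E *\<^sub>v (P *\<^sub>v w)"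
    using w E P Eb Pb Pbw by (simp add: add_mult_distrib_mat_vec[of _ n n] assoc_mult_mat_vec)
  finally have wE: "w = E *\<^sub>v (P *\<^sub>v w)" .
  have "P *\<^sub>v w = (X * E) *\<^sub>v (P *\<^sub>v w)" using XE P w by simp
  also have "\<dots> = 0\<^sub>v r" using Xw X E P w by (simp flip: wE add: assoc_mult_mat_vec)
  finally have "w = 0\<^sub>v n" using E by (subst wE) simp
  then show False using inj v unfolding w_def by blast
qed

lemma annihilator_factor:
  fixes X E P Pb Eb W Q :: "'a :: field mat"
  assumes X: "X \<in> carrier_mat r n" and E: "E \<in> carrier_mat n r" and P: "P \<in> carrier_mat r n"
    and Pb: "Pb \<in> carrier_mat q n" and Eb: "Eb \<in> carrier_mat n q" and W: "W \<in> carrier_mat n q"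
    and XE: "X * E = 1\<^sub>m r" and XW: "X * W = 0\<^sub>m r q" and decomp: "E * P + Eb * Pb = 1\<^sub>m n"
    and det: "det (Pb * W) \<noteq> 0"
    and Q: "Q \<in> carrier_mat m n" and QW: "Q * W = 0\<^sub>m m q"
  shows "Q = Q * E * X"
proof -
  define Z where "Z = Q - Q * E * X"
  have Z: "Z \<in> carrier_mat m n" unfolding Z_def using Q E X by auto
  note dims = carrier_matD[OF X] carrier_matD[OF E] carrier_matD[OF Q]
  have "Z * E = 0\<^sub>m m r"
    unfolding Z_def using Q E X XE by (simp add: minus_mult_distrib_mat_dim assoc_mult_mat_dim dims)
  have "Z = Z * (E * P + Eb * Pb)" using decomp Z by simp
  also have "\<dots> = Z * E * P + Z * Eb * Pb"
    using Z E P Eb Pb by (simp add: mult_add_distrib_mat_dim assoc_mult_mat_dim carrier_matD)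
  also have "\<dots> = Z * Eb * Pb" using \<open>Z * E = 0\<^sub>m m r\<close> Z Eb P Pb by simp
  finally have Zeq: "Z = Z * Eb * Pb" .
  moreover have "Z * W = 0\<^sub>m m q"
    unfolding Z_def using Q E X W QW XW by (simp add: minus_mult_distrib_mat_dim assoc_mult_mat_dim dims carrier_matD)
  moreover have "Z * Eb * (Pb * W) = Z * Eb * Pb * W"
    using Z Eb Pb W by (simp add: assoc_mult_mat_dim carrier_matD)
  ultimately have "Z * Eb * (Pb * W) = 0\<^sub>m m q"
    by (simp only: Zeq[symmetric])
  then have "Z * Eb = 0\<^sub>m m q"
    using mult_nonsingular_eq_0_mat[of "Pb * W" q] det Z Eb Pb W by auto
  then have "Z = 0\<^sub>m m n" using Pb by (subst Zeq) simp
  then show ?thesis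
    unfolding Z_def using Q E X by (auto simp: mat_eq_iff)
qed

lemma resolvent_mult_cmat_mult_vec_eq_0:
  assumes A: "A \<in> carrier_mat n n" and L: "L \<in> carrier_mat n q" and Pb: "Pb \<in> carrier_mat q n"
    and det: "det (Pb * L) \<noteq> 0" and v: "v \<in> carrier_vec q"
    and Rv: "(resolvent A * cmat L) *\<^sub>v v = 0\<^sub>v n"
  shows "v = 0\<^sub>v q"
proof (rule ccontr)
  assume "v \<noteq> 0\<^sub>v q"
  note R = resolvent_mat[OF A]
  have D: "svar \<cdot>\<^sub>m 1\<^sub>m n - cmat A \<in> carrier_mat n n" using A by auto
  have "cmat L *\<^sub>v v = ((svar \<cdot>\<^sub>m 1\<^sub>m n - cmat A) * (resolvent A * cmat L)) *\<^sub>v v"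
    using R L by (simp add: assoc_mult_mat[OF D R(1), of "cmat L" q, symmetric])
  also have "\<dots> = (svar \<cdot>\<^sub>m 1\<^sub>m n - cmat A) *\<^sub>v ((resolvent A * cmat L) *\<^sub>v v)"
    using D R(1) L v by (intro assoc_mult_mat_vec) auto
  also have "\<dots> = 0\<^sub>v n" using Rv D by simp
  finally have "cmat (Pb * L) *\<^sub>v v = 0\<^sub>v q"
    using cmat_mult[OF Pb L] Pb L v by (simp add: assoc_mult_mat_vec[of "cmat Pb" q n "cmat L" q])
  then have "det (cmat (Pb * L)) = 0"
    using det_0_iff_vec_prod_zero_field[of "cmat (Pb * L)" q] \<open>v \<noteq> 0\<^sub>v q\<close> v Pb L by auto
  then show False using det by (simp add: det_cmat rconst_def Zero_fract_def eq_fract)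
qed

lemma rectifier_properties:
  assumes A: "A \<in> carrier_mat n n" and L: "L \<in> carrier_mat n p"
    and P: "P \<in> carrier_mat r n" and Pd: "Pd \<in> carrier_mat n r"
    and Pb: "Pb \<in> carrier_mat q n" and Pbd: "Pbd \<in> carrier_mat n q"
    and inv1: "P * Pd = 1\<^sub>m r" and inv2: "Pb * Pbd = 1\<^sub>m q"
    and decomp: "Pd * P + Pbd * Pb = 1\<^sub>m n" and PL: "P * L = 0\<^sub>m r p"
  defines "X \<equiv> cmat P - resolvent (P * A * Pd) * cmat (P * A * Pbd * Pb)"
  shows "B \<in> carrier_mat n m \<Longrightarrow> X * (resolvent A * cmat B) = resolvent (P * A * Pd) * cmat (P * B)"
    and "X * (resolvent A * cmat L) = 0\<^sub>m r p"
    and "X * cmat Pd = 1\<^sub>m r"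
proof -
  define Y where "Y = P * A * Pbd * Pb"
  have Ah: "P * A * Pd \<in> carrier_mat r r" and Y: "Y \<in> carrier_mat r n"
    unfolding Y_def using P A Pd Pbd Pb by auto
  have Rh: "resolvent (P * A * Pd) \<in> carrier_mat r r" by (rule resolvent_mat(1)[OF Ah])
  have R: "resolvent A \<in> carrier_mat n n" by (rule resolvent_mat(1)[OF A])
  have "P * A = P * A * (Pd * P + Pbd * Pb)" using decomp P A by simp
  also have "\<dots> = P * A * Pd * P + Y"
    unfolding Y_def using P A Pd Pbd Pb by (simp add: mult_add_distrib_mat_dim assoc_mult_mat_dim)
  finally have XR: "X * resolvent A = resolvent (P * A * Pd) * cmat P"
    unfolding X_def Y_def[symmetric] by (rule resolvent_intertwining[OF A Ah P Y])
  have X: "X \<in> carrier_mat r n" unfolding X_def Y_def[symmetric] using P Rh Y by auto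
  show "X * (resolvent A * cmat B) = resolvent (P * A * Pd) * cmat (P * B)" if B: "B \<in> carrier_mat n m"
  proof -
    have "X * (resolvent A * cmat B) = resolvent (P * A * Pd) * cmat P * cmat B"
      unfolding XR[symmetric] using X R B by (simp add: assoc_mult_mat_dim)
    then show ?thesis using Rh P B by (simp add: cmat_mult[OF P B] assoc_mult_mat_dim)
  qed
  have "X * (resolvent A * cmat L) = resolvent (P * A * Pd) * cmat P * cmat L"
    unfolding XR[symmetric] using X R L by (simp add: assoc_mult_mat_dim)
  then show "X * (resolvent A * cmat L) = 0\<^sub>m r p"
    using Rh P L by (simp add: cmat_mult[OF P L, symmetric] PL assoc_mult_mat_dim)
  have "Y * Pd = P * A * Pbd * (Pb * Pd)"
    unfolding Y_def using P A Pbd Pb Pd by (simp add: assoc_mult_mat_dim)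
  then have "Y * Pd = 0\<^sub>m r r"
    using complement_mult_right_inverse_eq_0[OF P Pd Pb Pbd inv1 inv2 decomp] P A Pbd by simp
  then show "X * cmat Pd = 1\<^sub>m r"
    unfolding X_def Y_def[symmetric]
    using cmat_mult[OF P Pd, symmetric] cmat_mult[OF Y Pd, symmetric] inv1 Rh P Pd Y
    by (simp add: minus_mult_distrib_mat_dim assoc_mult_mat_dim) (auto intro!: eq_matI)
qed

lemma rectifier_factor:
  assumes A: "A \<in> carrier_mat n n" and L: "L \<in> carrier_mat n p"
    and P: "P \<in> carrier_mat r n" and Pd: "Pd \<in> carrier_mat n r"
    and Pb: "Pb \<in> carrier_mat p n" and Pbd: "Pbd \<in> carrier_mat n p"
    and inv1: "P * Pd = 1\<^sub>m r" and inv2: "Pb * Pbd = 1\<^sub>m p"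
    and decomp: "Pd * P + Pbd * Pb = 1\<^sub>m n" and PL: "P * L = 0\<^sub>m r p" and det: "det (Pb * L) \<noteq> 0"
    and Q: "Q \<in> carrier_mat m n" and QW: "Q * (resolvent A * cmat L) = 0\<^sub>m m p"
  defines "X \<equiv> cmat P - resolvent (P * A * Pd) * cmat (P * A * Pbd * Pb)"
  shows "Q = Q * cmat Pd * X"
proof -
  note XW = rectifier_properties(2)[OF A L P Pd Pb Pbd inv1 inv2 decomp PL, folded X_def]
    and XPd = rectifier_properties(3)[OF A L P Pd Pb Pbd inv1 inv2 decomp PL, folded X_def]
  have X: "X \<in> carrier_mat r n" and W: "resolvent A * cmat L \<in> carrier_mat n p"
    unfolding X_def using resolvent_mat(1)[OF A] resolvent_mat(1)[of "P * A * Pd" r] A L P Pd Pbd Pb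
    by auto
  have c: "cmat Pd \<in> carrier_mat n r" "cmat P \<in> carrier_mat r n"
    "cmat Pb \<in> carrier_mat p n" "cmat Pbd \<in> carrier_mat n p"
    using Pd P Pb Pbd by auto
  have decomp': "cmat Pd * cmat P + cmat Pbd * cmat Pb = 1\<^sub>m n"
    using arg_cong[OF decomp, of cmat] cmat_add[of "Pd * P" n n "Pbd * Pb"] cmat_mult[OF Pd P]
      cmat_mult[OF Pbd Pb] Pd P Pbd Pb by simp
  have "det (cmat Pb * (resolvent A * cmat L)) \<noteq> 0"
    by (rule det_complement_mult_nonzero[OF X c W XPd XW decomp'])
      (rule resolvent_mult_cmat_mult_vec_eq_0[OF A L Pb det])
  then show ?thesis by (rule annihilator_factor[OF X c W XPd XW decomp' _ Q QW])
qed

theorem proposition6: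
  fixes A B L P Pb Pd Pbd :: "real mat" and n m p r q :: nat
  assumes A: "A \<in> carrier_mat n n" and B: "B \<in> carrier_mat n m" and L: "L \<in> carrier_mat n p"
    and P: "P \<in> carrier_mat r n" and Pd: "Pd \<in> carrier_mat n r"
    and Pb: "Pb \<in> carrier_mat q n" and Pbd: "Pbd \<in> carrier_mat n q"
    and hurA: "hurwitz A"
    and RH_Gyu: "RH_inf (resolvent A * cmat B)"
    and RH_Gyv: "RH_inf (resolvent A * cmat L)"
    and inv1: "P * Pd = 1\<^sub>m r" and inv2: "Pb * Pbd = 1\<^sub>m q"
    and C1: "Pd * P + Pbd * Pb = 1\<^sub>m n"
    and C2: "hurwitz (P * A * Pd)" "hurwitz (Pb * A * Pbd)"
    and C3: "P * L = 0\<^sub>m r p" "square_mat (Pb * L)" "det (Pb * L) \<noteq> 0"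
  shows "\<forall>K \<in> carrier_mat m n.
     output_rectifying_retrofit (resolvent A * cmat B) (resolvent A * cmat L) K \<longleftrightarrow>
     (\<exists>Khat. stabilizing (resolvent (P * A * Pd) * cmat (P * B)) Khat \<and>
        K = Khat * (cmat P - resolvent (P * A * Pd) * cmat (P * A * Pbd * Pb)))"
proof -
  have "q = p" using C3(2) Pb L by auto
  define G W G' X where "G = resolvent A * cmat B" and "W = resolvent A * cmat L"
    and "G' = resolvent (P * A * Pd) * cmat (P * B)"
    and "X = cmat P - resolvent (P * A * Pd) * cmat (P * A * Pbd * Pb)"
  note rectifier = rectifier_properties[OF A L P Pd Pb Pbd inv1 inv2 C1 C3(1)]
  have XG: "X * G = G'" and XW: "X * W = 0\<^sub>m r p"
    using rectifier(1,2) B unfolding G_def W_def G'_def X_def by auto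
  have factor: "Q = Q * cmat Pd * X" if "Q \<in> carrier_mat m n" "Q * W = 0\<^sub>m m p" for Q
    using rectifier_factor[OF A L P Pd Pb[unfolded \<open>q = p\<close>] Pbd[unfolded \<open>q = p\<close>] inv1
        inv2[unfolded \<open>q = p\<close>] C1 C3(1) C3(3) that[unfolded W_def], folded X_def] .
  have Rh: "resolvent (P * A * Pd) \<in> carrier_mat r r" "RH_inf (resolvent (P * A * Pd))"
    using resolvent_mat(1) RH_inf_resolvent[OF C2(1)] P A Pd by auto
  have G: "G \<in> carrier_mat n m" and W: "W \<in> carrier_mat n p" and G': "G' \<in> carrier_mat r m"
    and X: "X \<in> carrier_mat r n" and "RH_inf G'" "RH_inf X"
    unfolding G_def W_def G'_def X_def using resolvent_mat(1)[OF A] Rh A B L P Pbd Pb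
    by (auto intro!: RH_inf_mult RH_inf_diff RH_inf_cmat)
  have "output_rectifying_retrofit G W K \<longleftrightarrow>
      (\<exists>Q' \<in> carrier_mat m r. RH_inf Q' \<and> invertible_mat (1\<^sub>m m + Q' * G') \<and>
        K = minv (1\<^sub>m m + Q' * G') * Q' * X)" for K
    by (rule output_rectifying_retrofit_iff_factor[OF G W X \<open>RH_inf X\<close>
        cmat_carrier_iff[THEN iffD2, OF Pd] RH_inf_cmat XG XW factor])
  moreover have "(\<exists>Khat. stabilizing G' Khat \<and> K = Khat * X) \<longleftrightarrow>
      (\<exists>Q' \<in> carrier_mat m r. RH_inf Q' \<and> invertible_mat (1\<^sub>m m + Q' * G') \<and>
        K = minv (1\<^sub>m m + Q' * G') * Q' * X)" for K
    unfolding stabilizing_iff_Youla[OF G' \<open>RH_inf G'\<close>] by auto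
  ultimately show ?thesis unfolding G_def W_def G'_def X_def by simp
qed

end
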